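(* Let $K\in K(2^{\mathbb{N}})$ be pseudo-tall. Then the ideal $\mathcal{I}_K$ has a Borel selector if and only if $K$ has a Borel pseudo-selector.
   Context: $K(2^{\mathbb{N}})$ is the hyperspace of closed subsets of $2^{\mathbb{N}}$; subsets of $\mathbb{N}$ are identified with elements of $2^{\mathbb{N}}$. $\downarrow K=\{x:\exists y\in K\ x\subseteq y\}$. $K$ is pseudo-tall if every infinite $x\subseteq\mathbb{N}$ has an infinite subset in $\downarrow K$. $\mathcal{I}_K$ is the ideal generated by $K$: $x\in\mathcal{I}_K$ iff $x\subseteq y_0\cup\dots\cup y_{n-1}$ for some $y_0,\dots,y_{n-1}\in K$. A Borel selector for a tall family $\mathcal{C}$ is a Borel $S:2^{\mathbb{N}}\to2^{\mathbb{N}}$ with $S(x)\subseteq x$, $S(x)\in\mathcal{C}$, and $S(x)$ infinite whenever $x$ is infinite. A Borel pseudo-selector for $K$ is a Borel $S:2^{\mathbb{N}}\to2^{\mathbb{N}}$ with $S(x)\subseteq x$, $S(x)\in\downarrow K$, and $S(x)$ infinite whenever $x$ is infinite. *)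

theory Defs
  imports "HOL-Analysis.Analysis"
begin

text \<open>Subsets of nat are identified with points of the Cantor space 2^N,
  represented as nat \<Rightarrow> bool with the product topology of discrete bool.\<close>

definition down :: "(nat \<Rightarrow> bool) set \<Rightarrow> (nat \<Rightarrow> bool) set" where
  "down K = {x. \<exists>y\<in>K. x \<le> y}"

definition pseudo_tall :: "(nat \<Rightarrow> bool) set \<Rightarrow> bool" where
  "pseudo_tall K \<longleftrightarrow> (\<forall>x. infinite {n. x n} \<longrightarrow>
      (\<exists>z. z \<le> x \<and> infinite {n. z n} \<and> z \<in> down K))"

definition ideal_gen :: "(nat \<Rightarrow> bool) set \<Rightarrow> (nat \<Rightarrow> bool) set" where
  "ideal_gen K = {x. \<exists>ys. set ys \<subseteq> K \<and> x \<le> foldr sup ys bot}"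

definition borel_selector :: "(nat \<Rightarrow> bool) set \<Rightarrow> ((nat \<Rightarrow> bool) \<Rightarrow> (nat \<Rightarrow> bool)) \<Rightarrow> bool" where
  "borel_selector C S \<longleftrightarrow> S \<in> borel_measurable borel \<and>
     (\<forall>x. S x \<le> x \<and> S x \<in> C \<and> (infinite {n. x n} \<longrightarrow> infinite {n. S x n}))"

definition borel_pseudo_selector :: "(nat \<Rightarrow> bool) set \<Rightarrow> ((nat \<Rightarrow> bool) \<Rightarrow> (nat \<Rightarrow> bool)) \<Rightarrow> bool" where
  "borel_pseudo_selector K S \<longleftrightarrow> S \<in> borel_measurable borel \<and>
     (\<forall>x. S x \<le> x \<and> S x \<in> down K \<and> (infinite {n. x n} \<longrightarrow> infinite {n. S x n}))"

end

theory Submission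
  imports Defs
begin

(* If z is infinite and lies in the ideal generated by K, it is covered by finitely many
  members y_0, ..., y_(n-1) of K, and some z \<inter> y_i is an infinite member of down K.  This choice
  can be made in a Borel way: coding n-element covers by single points of the Cantor space, the
  relation "W codes an n-element cover of z by members of down K" is closed, and a closed relation
  on the Cantor space has a Borel uniformization, namely the lexicographically greatest point of
  each section.  Following a Borel selector for the ideal by "the first coded piece meeting z in an
  infinite set" gives a Borel pseudo-selector.  Conversely down K is contained in the ideal, so a
  pseudo-selector is already a selector. *)

instance bool :: second_countable_topology
proof
  show "\<exists>B::bool set set. countable B \<and> open = generate_topology B"
    by (intro exI[of _ "Pow UNIV"])
       (auto intro!: generate_topology.Basis simp: open_discrete)
qed

lemma compact_UNIV_cantor: "compact (UNIV :: ('a \<Rightarrow> bool) set)"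
proof -
  have "compact_space (product_topology (\<lambda>_::'a. euclidean :: bool topology) UNIV)"
    by (rule compact_space_product_topology[THEN iffD2])
       (auto simp: compact_space_def finite_imp_compact)
  then show ?thesis
    by (simp add: euclidean_product_topology compact_space_def)
qed

lemma Hausdorff_space_euclidean_t2: "Hausdorff_space (euclidean :: 'a::t2_space topology)"
  unfolding Hausdorff_space_def disjnt_def by (metis hausdorff open_openin)

lemma Hausdorff_space_cantor: "Hausdorff_space (euclidean :: ('a \<Rightarrow> bool) topology)"
proof -
  have "Hausdorff_space (product_topology (\<lambda>_::'a. euclidean :: bool topology) UNIV)"
    by (rule Hausdorff_space_product_topology[THEN iffD2]) (simp add: Hausdorff_space_euclidean_t2)
  then show ?thesis
    by (simp only: euclidean_product_topology)
qed

lemma compact_imp_closed_cantor: "compact (A :: ('a \<Rightarrow> bool) set) \<Longrightarrow> closed A"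
  by (metis closed_closedin compactin_euclidean_iff compactin_imp_closedin Hausdorff_space_cantor)

lemma closed_fst_image_cantor:
  fixes S :: "(('a \<Rightarrow> bool) \<times> ('b \<Rightarrow> bool)) set"
  assumes "closed S"
  shows "closed (fst ` S)"
proof -
  have "compact (UNIV :: (('a \<Rightarrow> bool) \<times> ('b \<Rightarrow> bool)) set)"
    using compact_Times[OF compact_UNIV_cantor compact_UNIV_cantor] by simp
  with assms have "compact S"
    using closed_Int_compact by fastforce
  then show ?thesis
    by (intro compact_imp_closed_cantor compact_continuous_image continuous_intros)
qed

lemma closed_Collect_discrete_continuous:
  fixes f :: "'a::topological_space \<Rightarrow> 'b::discrete_topology"
  assumes "continuous_on UNIV f"
  shows "closed {x. P (f x)}"
  using continuous_closed_preimage[OF assms closed_UNIV, of "{b. P b}"]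
  by (simp add: closed_def open_discrete vimage_def)

lemma closed_Collect_pointwise_le:
  "closed {p :: ('a \<Rightarrow> bool) \<times> ('a \<Rightarrow> bool). fst p \<le> snd p}"
proof -
  have "{p :: ('a \<Rightarrow> bool) \<times> ('a \<Rightarrow> bool). fst p \<le> snd p} = (\<Inter>i. {p. \<not> fst p i} \<union> {p. snd p i})"
    by (auto simp: le_fun_def)
  moreover have "closed ({p :: ('a \<Rightarrow> bool) \<times> ('a \<Rightarrow> bool). \<not> fst p i} \<union> {p. snd p i})" for i
  proof (rule closed_Un)
    show "closed {p :: ('a \<Rightarrow> bool) \<times> ('a \<Rightarrow> bool). \<not> fst p i}"
      by (rule closed_Collect_discrete_continuous[where P=Not])
        (rule continuous_on_product_then_coordinatewise[OF continuous_on_fst[OF continuous_on_id]])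
    show "closed {p :: ('a \<Rightarrow> bool) \<times> ('a \<Rightarrow> bool). snd p i}"
      by (rule closed_Collect_discrete_continuous[where P="\<lambda>b. b"])
        (rule continuous_on_product_then_coordinatewise[OF continuous_on_snd[OF continuous_on_id]])
  qed
  ultimately show ?thesis by (simp add: closed_INT)
qed

lemma borel_measurable_bool_iff: "(f :: 'a \<Rightarrow> bool) \<in> borel_measurable M \<longleftrightarrow> Measurable.pred M f"
proof -
  have "(borel_measurable M :: ('a \<Rightarrow> bool) set) = measurable M (count_space UNIV)"
    by (rule measurable_cong_sets[OF refl sets_borel_eq_count_space])
  then show ?thesis
    by (simp add: Measurable.pred_def)
qed

lemma borel_measurable_cantor_iff:
  "(f :: 'a \<Rightarrow> 'b::countable \<Rightarrow> bool) \<in> borel_measurable M \<longleftrightarrow>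
    (\<forall>i. Measurable.pred M (\<lambda>x. f x i))"
  by (metis borel_measurable_bool_iff measurable_coordinatewise_then_product
      measurable_product_then_coordinatewise)

lemma pred_borel_coordinate: "Measurable.pred borel (\<lambda>x :: 'a::countable \<Rightarrow> bool. x i)"
  using measurable_product_coordinates by (simp add: borel_measurable_bool_iff[symmetric])

lemma measurable_first_success:
  fixes h :: "nat \<Rightarrow> 'a \<Rightarrow> 'b"
  assumes h: "\<And>j. h j \<in> measurable M N" and P: "\<And>j. Measurable.pred M (P j)"
    and d: "d \<in> space N"
  shows "(\<lambda>x. if \<exists>j. P j x then h (LEAST j. P j x) x else d) \<in> measurable M N"
proof (rule measurable_If)
  show "(\<lambda>x. h (LEAST j. P j x) x) \<in> measurable M N"
    by (rule measurable_compose_countable'[OF h measurable_Least[OF P]]) simp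
  show "(\<lambda>x. d) \<in> measurable M N"
    using d by simp
  show "{x \<in> space M. \<exists>j. P j x} \<in> sets M"
    using P by measurable
qed

lemma pred_borel_infinite_support: "Measurable.pred borel (\<lambda>x :: nat \<Rightarrow> bool. infinite {i. x i})"
proof -
  have "{x :: nat \<Rightarrow> bool. x i} \<in> sets borel" for i
    using pred_borel_coordinate[of i] by (simp add: Measurable.pred_def)
  then have "Measurable.pred borel (\<lambda>x :: nat \<Rightarrow> bool. finite {i. x i})"
    by (intro measurable_finite) simp
  then show ?thesis
    by (rule pred_intros_logic)
qed

definition cylinder :: "bool list \<Rightarrow> (nat \<Rightarrow> bool) set" where
  "cylinder l = {w. \<forall>k<length l. w k = l ! k}"

lemma closed_cylinder: "closed (cylinder l)"
proof -
  have "closed {w :: nat \<Rightarrow> bool. w k = l ! k}" for k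
    by (rule closed_Collect_discrete_continuous[where P="\<lambda>b. b = l ! k"])
      (rule continuous_on_product_coordinates)
  moreover have "cylinder l = (\<Inter>k<length l. {w. w k = l ! k})"
    by (auto simp: cylinder_def)
  ultimately show ?thesis
    by (simp add: closed_INT)
qed

(* The next bit is True iff the section of R at z still meets the cylinder of the prefix chosen
  so far extended by True: a greedy search for the lexicographically greatest point of the section. *)
fun greedy_prefix :: "(('a \<Rightarrow> bool) \<times> (nat \<Rightarrow> bool)) set \<Rightarrow> ('a \<Rightarrow> bool) \<Rightarrow> nat \<Rightarrow> bool list" where
  "greedy_prefix R z 0 = []"
| "greedy_prefix R z (Suc m) =
    greedy_prefix R z m @ [\<exists>w \<in> cylinder (greedy_prefix R z m @ [True]). (z, w) \<in> R]"

definition greedy_branch :: "(('a \<Rightarrow> bool) \<times> (nat \<Rightarrow> bool)) set \<Rightarrow> ('a \<Rightarrow> bool) \<Rightarrow> nat \<Rightarrow> bool" where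
  "greedy_branch R z m = greedy_prefix R z (Suc m) ! m"

lemma length_greedy_prefix [simp]: "length (greedy_prefix R z m) = m"
  by (induction m) simp_all

lemma nth_greedy_prefix: "k < m \<Longrightarrow> greedy_prefix R z m ! k = greedy_branch R z k"
  by (induction m) (auto simp: greedy_branch_def nth_append less_Suc_eq)

lemma greedy_prefix_extendable:
  assumes "(z, w) \<in> R"
  shows "\<exists>w' \<in> cylinder (greedy_prefix R z m). (z, w') \<in> R"
proof (induction m)
  case 0
  show ?case using assms by (auto simp: cylinder_def)
next
  case (Suc m)
  then obtain w' where w': "w' \<in> cylinder (greedy_prefix R z m)" "(z, w') \<in> R" by blast
  show ?case
  proof (cases "\<exists>w \<in> cylinder (greedy_prefix R z m @ [True]). (z, w) \<in> R")
    case True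
    then show ?thesis by simp
  next
    case False
    then have "w' \<notin> cylinder (greedy_prefix R z m @ [True])"
      using w'(2) by blast
    with w'(1) have "w' \<in> cylinder (greedy_prefix R z m @ [False])"
      by (auto simp: cylinder_def nth_append less_Suc_eq)
    with False w'(2) show ?thesis by auto
  qed
qed

lemma closed_section_meets_cylinder:
  fixes R :: "(('a \<Rightarrow> bool) \<times> (nat \<Rightarrow> bool)) set"
  assumes "closed R"
  shows "closed {z. \<exists>w \<in> cylinder l. (z, w) \<in> R}"
proof -
  have "{z. \<exists>w \<in> cylinder l. (z, w) \<in> R} = fst ` (R \<inter> UNIV \<times> cylinder l)"
    by force
  then show ?thesis
    by (simp add: assms closed_Int closed_Times closed_cylinder closed_fst_image_cantor)
qed

lemma pred_borel_greedy_prefix: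
  assumes "closed R"
  shows "Measurable.pred borel (\<lambda>z. greedy_prefix R z m = l)"
proof (induction m arbitrary: l)
  case 0
  show ?case by simp
next
  case (Suc m)
  define meets where "meets l' z \<longleftrightarrow> (\<exists>w \<in> cylinder (l' @ [True]). (z, w) \<in> R)" for l' z
  have "Measurable.pred borel (meets l')" for l'
    using borel_closed[OF closed_section_meets_cylinder[OF assms]]
    by (simp add: Measurable.pred_def meets_def)
  then have "Measurable.pred borel (\<lambda>z. \<exists>l'. greedy_prefix R z m = l' \<and>
      (l = l' @ [True] \<and> meets l' z \<or> l = l' @ [False] \<and> \<not> meets l' z))"
    using Suc by measurable
  moreover have "greedy_prefix R z (Suc m) = l \<longleftrightarrow> (\<exists>l'. greedy_prefix R z m = l' \<and>
      (l = l' @ [True] \<and> meets l' z \<or> l = l' @ [False] \<and> \<not> meets l' z))" for z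
    by (auto simp: meets_def)
  ultimately show ?case
    by simp
qed

lemma borel_measurable_greedy_branch:
  assumes "closed R"
  shows "greedy_branch R \<in> borel_measurable borel"
proof -
  have "Measurable.pred borel (\<lambda>z. \<exists>l. greedy_prefix R z (Suc m) = l \<and> l ! m)" for m
    using pred_borel_greedy_prefix[OF assms] by measurable
  then show ?thesis
    by (simp add: borel_measurable_cantor_iff greedy_branch_def)
qed

lemma tendsto_fun_componentwise_iff:
  "(f \<longlongrightarrow> l) F \<longleftrightarrow> (\<forall>i. ((\<lambda>x. f x i) \<longlongrightarrow> l i) F)"
  for f :: "'b \<Rightarrow> 'a \<Rightarrow> 'c::topological_space"
proof -
  have "limitin (product_topology (\<lambda>_. euclidean) UNIV) f l F \<longleftrightarrow>
      (\<forall>i. ((\<lambda>x. f x i) \<longlongrightarrow> l i) F)"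
    by (simp add: limitin_componentwise)
  then show ?thesis
    by (simp add: euclidean_product_topology)
qed

lemma greedy_branch_in_section:
  assumes "closed R" and "(z, w) \<in> R"
  shows "(z, greedy_branch R z) \<in> R"
proof -
  obtain W where W: "\<And>m. W m \<in> cylinder (greedy_prefix R z m)" "\<And>m. (z, W m) \<in> R"
    using greedy_prefix_extendable[OF assms(2)] by metis
  have "eventually (\<lambda>m. W m k = greedy_branch R z k) sequentially" for k
    using W(1) by (auto simp: eventually_sequentially cylinder_def nth_greedy_prefix intro!: exI[of _ "Suc k"])
  then have "W \<longlonglongrightarrow> greedy_branch R z"
    by (simp add: tendsto_fun_componentwise_iff tendsto_eventually)
  then have "(\<lambda>m. (z, W m)) \<longlonglongrightarrow> (z, greedy_branch R z)"
    by (intro tendsto_Pair tendsto_const)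
  with W(2) show ?thesis
    by (rule closed_sequentially[OF assms(1)])
qed

lemma down_le_mem: "x \<le> y \<Longrightarrow> y \<in> down K \<Longrightarrow> x \<in> down K"
  unfolding down_def using order_trans by blast

lemma bot_in_down: "K \<noteq> {} \<Longrightarrow> bot \<in> down K"
  unfolding down_def by auto

lemma down_subset_ideal_gen: "down K \<subseteq> ideal_gen K"
proof
  fix x assume "x \<in> down K"
  then obtain y where "y \<in> K" "x \<le> y"
    by (auto simp: down_def)
  then show "x \<in> ideal_gen K"
    unfolding ideal_gen_def by (intro CollectI exI[of _ "[y]"]) simp
qed

lemma closed_down:
  assumes "closed K"
  shows "closed (down K)"
proof -
  have "down K = fst ` ({p. fst p \<le> snd p} \<inter> UNIV \<times> K)"
  proof (intro equalityI subsetI)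
    fix x assume "x \<in> down K"
    then obtain y where "x \<le> y" "y \<in> K"
      by (auto simp: down_def)
    then show "x \<in> fst ` ({p. fst p \<le> snd p} \<inter> UNIV \<times> K)"
      by (intro rev_image_eqI[of "(x, y)"]) auto
  next
    fix x assume "x \<in> fst ` ({p. fst p \<le> snd p} \<inter> UNIV \<times> K)"
    then obtain y where "x \<le> y" "y \<in> K"
      by force
    then show "x \<in> down K"
      by (auto simp: down_def)
  qed
  then show ?thesis
    by (simp add: assms closed_Int closed_Times closed_Collect_pointwise_le closed_fst_image_cantor)
qed

definition slice :: "(nat \<Rightarrow> bool) \<Rightarrow> nat \<Rightarrow> nat \<Rightarrow> bool" where
  "slice W i = (\<lambda>m. W (prod_encode (i, m)))"

(* W codes n sets by its first n slices; (z, W) \<in> ideal_cover K n says they lie in down K and cover z. *)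
definition ideal_cover :: "(nat \<Rightarrow> bool) set \<Rightarrow> nat \<Rightarrow> ((nat \<Rightarrow> bool) \<times> (nat \<Rightarrow> bool)) set" where
  "ideal_cover K n = {(z, W). (\<forall>i<n. slice W i \<in> down K) \<and> (\<forall>m. z m \<longrightarrow> (\<exists>i<n. slice W i m))}"

lemma closed_ideal_cover:
  assumes "closed K"
  shows "closed (ideal_cover K n)"
proof -
  have fst_coord: "continuous_on UNIV (\<lambda>p :: (nat \<Rightarrow> bool) \<times> (nat \<Rightarrow> bool). fst p m)" for m
    by (rule continuous_on_product_then_coordinatewise[OF continuous_on_fst[OF continuous_on_id]])
  have snd_coord: "continuous_on UNIV (\<lambda>p :: (nat \<Rightarrow> bool) \<times> (nat \<Rightarrow> bool). snd p k)" for k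
    by (rule continuous_on_product_then_coordinatewise[OF continuous_on_snd[OF continuous_on_id]])
  have slice_cont: "continuous_on UNIV (\<lambda>p :: (nat \<Rightarrow> bool) \<times> (nat \<Rightarrow> bool). slice (snd p) i)" for i
    unfolding slice_def by (intro continuous_on_coordinatewise_then_product snd_coord)
  have slices: "closed {p :: (nat \<Rightarrow> bool) \<times> (nat \<Rightarrow> bool). slice (snd p) i \<in> down K}" for i
    using continuous_closed_preimage[OF slice_cont[of i] closed_UNIV closed_down[OF assms]]
    by (simp add: vimage_def)
  have covers: "closed ({p :: (nat \<Rightarrow> bool) \<times> (nat \<Rightarrow> bool). \<not> fst p m} \<union>
      (\<Union>i<n. {p. snd p (prod_encode (i, m))}))" for m
  proof (rule closed_Un)
    show "closed {p :: (nat \<Rightarrow> bool) \<times> (nat \<Rightarrow> bool). \<not> fst p m}"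
      by (rule closed_Collect_discrete_continuous[where P=Not, OF fst_coord])
    show "closed (\<Union>i<n. {p :: (nat \<Rightarrow> bool) \<times> (nat \<Rightarrow> bool). snd p (prod_encode (i, m))})"
      by (simp add: closed_UN closed_Collect_discrete_continuous[where P="\<lambda>b. b", OF snd_coord])
  qed
  have "ideal_cover K n = (\<Inter>i<n. {p. slice (snd p) i \<in> down K}) \<inter>
      (\<Inter>m. {p. \<not> fst p m} \<union> (\<Union>i<n. {p. snd p (prod_encode (i, m))}))"
    by (auto simp: ideal_cover_def slice_def) (metis lessThan_iff)
  then show ?thesis
    using slices covers by (simp add: closed_Int closed_INT)
qed

lemma ideal_gen_imp_ideal_cover:
  assumes "z \<in> ideal_gen K"
  shows "\<exists>n W. (z, W) \<in> ideal_cover K n"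
proof -
  obtain ys where ys: "set ys \<subseteq> K" "z \<le> foldr sup ys bot"
    using assms by (auto simp: ideal_gen_def)
  have foldr_sup: "foldr sup ys bot m \<longleftrightarrow> (\<exists>y\<in>set ys. y m)" for m :: nat
    by (induction ys) auto
  define W where "W k = (case prod_decode k of (i, m) \<Rightarrow> i < length ys \<and> (ys ! i) m)" for k
  have slice_W: "slice W i = ys ! i" if "i < length ys" for i
    using that by (auto simp: slice_def W_def)
  have "ys ! i \<in> down K" if "i < length ys" for i
    using that ys(1) nth_mem by (auto simp: down_def)
  moreover have "\<exists>i<length ys. slice W i m" if zm: "z m" for m
  proof -
    obtain y where "y \<in> set ys" "y m"
      using zm ys(2) foldr_sup by (auto simp: le_fun_def)
    then show ?thesis
      by (auto simp: in_set_conv_nth slice_W)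
  qed
  ultimately have "(z, W) \<in> ideal_cover K (length ys)"
    unfolding ideal_cover_def by (simp add: slice_W)
  then show ?thesis by blast
qed

lemma ideal_cover_infinite_slice:
  assumes "(z, W) \<in> ideal_cover K n" and "infinite {m. z m}"
  shows "\<exists>i<n. infinite {m. z m \<and> slice W i m}"
proof (rule ccontr)
  assume "\<not> ?thesis"
  then have "finite (\<Union>i<n. {m. z m \<and> slice W i m})"
    by simp
  moreover have "{m. z m} \<subseteq> (\<Union>i<n. {m. z m \<and> slice W i m})"
    using assms(1) unfolding ideal_cover_def by blast
  ultimately have "finite {m. z m}"
    by (rule finite_subset[rotated])
  with assms(2) show False
    by contradiction
qed

(* j codes a pair (n, i): the i-th piece of the Borel-chosen n-element cover, cut down to z. *)
definition cover_piece :: "(nat \<Rightarrow> bool) set \<Rightarrow> nat \<Rightarrow> (nat \<Rightarrow> bool) \<Rightarrow> nat \<Rightarrow> bool" where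
  "cover_piece K j z = (case prod_decode j of (n, i) \<Rightarrow>
      \<lambda>m. z m \<and> slice (greedy_branch (ideal_cover K n) z) i m)"

lemma cover_piece_le: "cover_piece K j z \<le> z"
  by (simp add: cover_piece_def le_fun_def split: prod.split)

lemma borel_measurable_cover_piece:
  assumes "closed K"
  shows "cover_piece K j \<in> borel_measurable borel"
proof -
  obtain n i where j: "prod_decode j = (n, i)"
    by fastforce
  have "greedy_branch (ideal_cover K n) \<in> borel_measurable borel"
    by (rule borel_measurable_greedy_branch[OF closed_ideal_cover[OF assms]])
  then have "Measurable.pred borel (\<lambda>z. greedy_branch (ideal_cover K n) z k)" for k
    by (simp add: borel_measurable_cantor_iff)
  then have "Measurable.pred borel (\<lambda>z. z m \<and> greedy_branch (ideal_cover K n) z (prod_encode (i, m)))"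
    for m using pred_borel_coordinate by measurable
  then show ?thesis
    by (simp add: borel_measurable_cantor_iff cover_piece_def j slice_def)
qed

lemma ideal_gen_infinite_cover_piece:
  assumes "closed K" and "z \<in> ideal_gen K" and "infinite {m. z m}"
  shows "\<exists>j. cover_piece K j z \<in> down K \<and> infinite {m. cover_piece K j z m}"
proof -
  obtain n W where "(z, W) \<in> ideal_cover K n"
    using ideal_gen_imp_ideal_cover[OF assms(2)] by blast
  then have cover: "(z, greedy_branch (ideal_cover K n) z) \<in> ideal_cover K n"
    by (rule greedy_branch_in_section[OF closed_ideal_cover[OF assms(1)]])
  then obtain i where "i < n"
    and infinite: "infinite {m. z m \<and> slice (greedy_branch (ideal_cover K n) z) i m}"
    using ideal_cover_infinite_slice assms(3) by blast
  have "cover_piece K (prod_encode (n, i)) z \<le> slice (greedy_branch (ideal_cover K n) z) i"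
    by (simp add: cover_piece_def le_fun_def)
  moreover have "slice (greedy_branch (ideal_cover K n) z) i \<in> down K"
    using cover \<open>i < n\<close> by (simp add: ideal_cover_def)
  ultimately show ?thesis
    using infinite down_le_mem by (auto simp: cover_piece_def intro!: exI[of _ "prod_encode (n, i)"])
qed

lemma borel_reduction_ideal_gen_to_down:
  assumes "closed K" and "K \<noteq> {}"
  obtains T where "T \<in> borel_measurable borel" and "\<And>z. T z \<le> z" and "\<And>z. T z \<in> down K"
    and "\<And>z. z \<in> ideal_gen K \<Longrightarrow> infinite {m. z m} \<Longrightarrow> infinite {m. T z m}"
proof -
  define good where "good j z \<longleftrightarrow> cover_piece K j z \<in> down K \<and> infinite {m. cover_piece K j z m}"
    for j z
  define T where "T z = (if \<exists>j. good j z then cover_piece K (LEAST j. good j z) z else bot)" for z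
  have "Measurable.pred borel (good j)" for j
  proof -
    note piece_meas = borel_measurable_cover_piece[OF assms(1)]
    have "Measurable.pred borel (\<lambda>z. cover_piece K j z \<in> down K)"
      using measurable_sets[OF piece_meas borel_closed[OF closed_down[OF assms(1)]]]
      by (simp add: Measurable.pred_def vimage_def)
    moreover have "Measurable.pred borel (\<lambda>z. infinite {m. cover_piece K j z m})"
      using measurable_compose[OF piece_meas pred_borel_infinite_support] .
    ultimately show ?thesis
      unfolding good_def by measurable
  qed
  then have "T \<in> borel_measurable borel"
    unfolding T_def by (intro measurable_first_success borel_measurable_cover_piece assms(1)) simp_all
  moreover have "T z \<le> z" for z
    by (simp add: T_def cover_piece_le)
  moreover have "T z \<in> down K" for z
    using LeastI_ex[of "\<lambda>j. good j z"] bot_in_down[OF assms(2)] by (auto simp: T_def good_def)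
  moreover have "infinite {m. T z m}" if "z \<in> ideal_gen K" "infinite {m. z m}" for z
    using ideal_gen_infinite_cover_piece[OF assms(1) that] LeastI_ex[of "\<lambda>j. good j z"]
    by (auto simp: T_def good_def)
  ultimately show ?thesis
    using that by blast
qed

(* Pseudo-tallness is used only here: the reduction needs bot \<in> down K as its default value. *)
lemma pseudo_tall_imp_nonempty:
  assumes "pseudo_tall K"
  shows "K \<noteq> {}"
proof -
  have "infinite {n::nat. True}"
    by simp
  then obtain z where "z \<in> down K"
    using assms unfolding pseudo_tall_def by blast
  then show ?thesis
    by (auto simp: down_def)
qed

theorem mainTheorem15:
  fixes K :: "(nat \<Rightarrow> bool) set"
  assumes "closed K" and "pseudo_tall K"
  shows "(\<exists>S. borel_selector (ideal_gen K) S) \<longleftrightarrow> (\<exists>S. borel_pseudo_selector K S)"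
proof
  assume "\<exists>S. borel_selector (ideal_gen K) S"
  then obtain S where S: "borel_selector (ideal_gen K) S"
    by blast
  obtain T where T: "T \<in> borel_measurable borel" "\<And>z. T z \<le> z" "\<And>z. T z \<in> down K"
    "\<And>z. z \<in> ideal_gen K \<Longrightarrow> infinite {m. z m} \<Longrightarrow> infinite {m. T z m}"
    using borel_reduction_ideal_gen_to_down[OF assms(1) pseudo_tall_imp_nonempty[OF assms(2)]] by blast
  have "borel_pseudo_selector K (T \<circ> S)"
    unfolding borel_pseudo_selector_def
  proof (intro conjI allI impI)
    show "T \<circ> S \<in> borel_measurable borel"
      using S T(1) measurable_comp[of S borel borel T borel] by (simp add: borel_selector_def)
    fix x
    show "(T \<circ> S) x \<le> x"
      using S order_trans[OF T(2)] by (simp add: borel_selector_def)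
    show "(T \<circ> S) x \<in> down K"
      using T(3) by simp
    show "infinite {n. (T \<circ> S) x n}" if "infinite {n. x n}"
      using S T(4) that by (simp add: borel_selector_def)
  qed
  then show "\<exists>S. borel_pseudo_selector K S"
    by blast
next
  assume "\<exists>S. borel_pseudo_selector K S"
  then obtain S where "borel_pseudo_selector K S"
    by blast
  then have "borel_selector (ideal_gen K) S"
    using down_subset_ideal_gen by (auto simp: borel_selector_def borel_pseudo_selector_def)
  then show "\<exists>S. borel_selector (ideal_gen K) S"
    by blast
qed

end
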